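(* Let $N\ge2$, $\mathrm{G}=\mathrm{SL}_N(\mathbb{R})$, $\mathrm{K}=\mathrm{SO}_N(\mathbb{R})$, and let $\mathscr{I}_0=\{I_1,\dots,I_{k_0}\}$ be a partition of $\{1,\dots,N\}$ into nonempty consecutive blocks. Let $G_{\mathrm{hor}}:=\{g\in\mathrm{G}: g\,\mathrm{U}_{\mathscr{I}_0}\mathrm{K}/\mathrm{K}=\mathrm{U}_{\mathscr{I}_0}\mathrm{K}/\mathrm{K}\}$ be the stabilizer in $\mathrm{G}$ of the horocycle $\mathrm{U}_{\mathscr{I}_0}\mathrm{K}/\mathrm{K}\subset\mathrm{G}/\mathrm{K}$. Then $G_{\mathrm{hor}}=N_{\mathrm{K}}(\mathrm{U}_{\mathscr{I}_0})\cdot\mathrm{U}_{\mathscr{I}_0}$, where $N_{\mathrm{K}}(\mathrm{U}_{\mathscr{I}_0})$ is the normalizer of $\mathrm{U}_{\mathscr{I}_0}$ in $\mathrm{K}$, and hence the identity component is $G_{\mathrm{hor}}^\circ=\mathrm{K}_{\mathscr{I}_0}\cdot\mathrm{U}_{\mathscr{I}_0}$.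
   Context: Consecutive blocks: $i_1<i_2$ whenever $i_1\in I_{k_1}$, $i_2\in I_{k_2}$, $k_1<k_2$. $\mathbb{R}^I$ is the span of $e_i$, $i\in I$. $\mathrm{U}_{\mathscr{I}_0}:=\{g\in\mathrm{G}:(\mathrm{id}-g)\mathbb{R}^{I_k}\subset\mathbb{R}^{I_1\cup\dots\cup I_{k-1}}\ \forall k\}$; $\mathrm{K}_{\mathscr{I}_0}$ is the group of block-diagonal matrices (blocks $I_k$) with each block in $\mathrm{SO}_{|I_k|}(\mathbb{R})$. *)

theory Defs
  imports "HOL-Analysis.Analysis" "HOL-Library.Disjoint_Sets"
begin

text \<open>Matrices in real^'n^'n act on column vectors; 'n is a finite linearly ordered
index type playing the role of {1,...,N}.\<close>

definition SLN :: "(real^'n^'n) set" where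
  "SLN = {g. det g = 1}"

definition SON :: "(real^'n^'n) set" where
  "SON = {g. orthogonal_matrix g \<and> det g = 1}"

definition coordspace :: "'n set \<Rightarrow> (real^'n) set" where
  "coordspace I = span ((\<lambda>i. axis i 1) ` I)"

definition block_before :: "('n::linorder) set \<Rightarrow> 'n set \<Rightarrow> bool" where
  "block_before J I \<longleftrightarrow> (\<forall>j\<in>J. \<forall>i\<in>I. j < i)"

definition consecutive_partition :: "('n::{finite,linorder}) set set \<Rightarrow> bool" where
  "consecutive_partition P \<longleftrightarrow> partition_on UNIV P \<and>
     (\<forall>I\<in>P. \<forall>J\<in>P. I \<noteq> J \<longrightarrow> block_before I J \<or> block_before J I)"

definition U_part :: "('n::{finite,linorder}) set set \<Rightarrow> ((real, 'n) vec, 'n) vec set" where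
  "U_part P = {g \<in> SLN. \<forall>I\<in>P.
      (\<lambda>x. x - g *v x) ` coordspace I \<subseteq> coordspace (\<Union>{J\<in>P. block_before J I})}"

definition block_det :: "real^'n^'n \<Rightarrow> 'n set \<Rightarrow> real" where
  "block_det g I = (\<Sum>p | p permutes I. of_int (sign p) * (\<Prod>i\<in>I. g $ i $ p i))"

definition block_orthogonal :: "real^'n^'n \<Rightarrow> 'n set \<Rightarrow> bool" where
  "block_orthogonal g I \<longleftrightarrow>
     (\<forall>i\<in>I. \<forall>j\<in>I. (\<Sum>l\<in>I. g $ l $ i * g $ l $ j) = (if i = j then 1 else 0))"

definition K_part :: "('n::{finite,linorder}) set set \<Rightarrow> ((real, 'n) vec, 'n) vec set" where
  "K_part P = {g. (\<forall>i j. g $ i $ j \<noteq> 0 \<longrightarrow> (\<exists>I\<in>P. i \<in> I \<and> j \<in> I)) \<and>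
      (\<forall>I\<in>P. block_orthogonal g I \<and> block_det g I = 1)}"

text \<open>Points of G/K are left cosets gK.\<close>
definition lcosetK :: "real^'n^'n \<Rightarrow> (real^'n^'n) set" where
  "lcosetK g = (\<lambda>k. g ** k) ` SON"

definition G_hor :: "('n::{finite,linorder}) set set \<Rightarrow> ((real, 'n) vec, 'n) vec set" where
  "G_hor P = {g \<in> SLN. (\<lambda>h. lcosetK (g ** h)) ` U_part P = lcosetK ` U_part P}"

definition normalizer_K :: "(real^'n^'n) set \<Rightarrow> (real^'n^'n) set" where
  "normalizer_K H = {k \<in> SON. (\<lambda>u. k ** u ** matrix_inv k) ` H = H}"

definition setmul :: "(real^'n^'n) set \<Rightarrow> (real^'n^'n) set \<Rightarrow> (real^'n^'n) set" where
  "setmul A B = {a ** b | a b. a \<in> A \<and> b \<in> B}"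

end

(*
  An element g of the stabilizer maps the identity coset into the horocycle U K/K, so
  g = u k with u in U and k in SO_N; since u preserves the horocycle, so does k. Since |h^T x|^2 = x^T (h h^T) x, the
  horocycle determines for every vector x the lower bound of |h^T x| over h in U, and an
  orthogonal k stabilizing it transports these bounds. The vectors x for which |x| is the
  bound are exactly those supported in a single block, so each column of k^T is; a shear
  estimate combined with a dimension count shows that these blocks cannot move backwards.
  Applied to k and k^T this makes k block diagonal, which is the same as normalizing U.

  For the identity component, the block determinants of the block-diagonal factor are
  continuous and take values +-1 on the stabilizer, hence equal 1 on the component.
  Conversely, plane rotations inside a block connect every element of K_I0 to the identity,
  and U is contractible.
*)
theory Submission
  imports Defs
begin

lemma coordspace_eq: "coordspace S = {x. \<forall>i. i \<notin> S \<longrightarrow> x$i = 0}"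
proof
  show "coordspace S \<subseteq> {x. \<forall>i. i \<notin> S \<longrightarrow> x$i = 0}"
    unfolding coordspace_def
    by (rule span_minimal) (auto simp: subspace_def axis_def)
next
  show "{x. \<forall>i. i \<notin> S \<longrightarrow> x$i = 0} \<subseteq> coordspace S"
  proof
    fix x :: "real^'a" assume x: "x \<in> {x. \<forall>i. i \<notin> S \<longrightarrow> x$i = 0}"
    have "x = (\<Sum>i\<in>UNIV. x$i *\<^sub>R axis i 1)"
      by (simp add: basis_expansion scalar_mult_eq_scaleR[symmetric])
    also have "\<dots> = (\<Sum>i\<in>S. x$i *\<^sub>R axis i 1)"
      using x by (intro sum.mono_neutral_cong_right) auto
    also have "\<dots> \<in> coordspace S"
      unfolding coordspace_def by (intro span_sum span_scale span_base) auto
    finally show "x \<in> coordspace S" .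
  qed
qed

lemma sum_UNIV_eq_single:
  fixes f :: "'a::finite \<Rightarrow> 'b::comm_monoid_add"
  assumes "\<And>l. l \<noteq> i \<Longrightarrow> f l = 0"
  shows "(\<Sum>l\<in>UNIV. f l) = f i"
  using assms by (subst sum.mono_neutral_right[of UNIV "{i}"]) auto

lemma matrix_mult_nth: "(A ** B)$i$j = (\<Sum>l\<in>UNIV. A$i$l * B$l$j)"
  by (simp add: matrix_matrix_mult_def)

lemma mat_1_nth: "(mat 1 :: 'a::zero_neq_one^'n^'n)$i$j = (if i = j then 1 else 0)"
  by (simp add: mat_def)

lemma axis_nth_if: "axis i x $ j = (if j = i then x else 0)"
  by (simp add: axis_def)

lemma orthogonal_matrix_iff_sum:
  "orthogonal_matrix (k::real^'n^'n) \<longleftrightarrow> (\<forall>c d. (\<Sum>l\<in>UNIV. k$l$c * k$l$d) = (if c = d then 1 else 0))"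
  by (simp add: orthogonal_matrix vec_eq_iff matrix_mult_nth mat_1_nth transpose_def)

lemma matrix_vector_mult_axis_nth [simp]: "((A::real^'n^'m) *v axis j 1)$i = A$i$j"
  by (simp add: matrix_vector_mult_basis column_def)

lemma transpose_matrix_vector_nth: "(transpose (A::real^'n^'m) *v x)$j = (\<Sum>i\<in>UNIV. A$i$j * x$i)"
  by (simp add: matrix_vector_mult_def transpose_def mult.commute)

lemma norm_less_if_coordinate_dropped:
  fixes x y :: "real^'n"
  assumes "\<And>i. y$i = x$i \<or> y$i = 0" and "y$b = 0" and "x$b \<noteq> 0"
  shows "norm y < norm x"
proof -
  have "(\<Sum>i\<in>UNIV. (y$i)^2) < (\<Sum>i\<in>UNIV. (x$i)^2)"
  proof (rule sum_strict_mono_ex1)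
    show "\<forall>i\<in>UNIV. (y$i)^2 \<le> (x$i)^2" using assms(1) by (metis order_refl zero_le_power2 power_zero_numeral)
  qed (use assms(2,3) in \<open>auto intro!: exI[of _ b]\<close>)
  moreover have "(norm v)^2 = (\<Sum>i\<in>UNIV. (v$i)^2)" for v :: "real^'n"
    unfolding power2_norm_eq_inner inner_vec_def by (simp add: power2_eq_square)
  ultimately have "(norm y)^2 < (norm x)^2" by simp
  then show ?thesis by (simp add: power_less_imp_less_base)
qed

lemma matrix_inv_eqI:
  fixes A :: "real^'n^'n"
  assumes AB: "A ** B = mat 1" and BA: "B ** A = mat 1"
  shows "matrix_inv A = B"
proof -
  have "invertible A" using AB BA by (auto simp: invertible_def)
  then have inv: "matrix_inv A ** A = mat 1"
    unfolding invertible_def matrix_inv_def by (rule someI2_ex) blast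
  have "matrix_inv A = matrix_inv A ** (A ** B)" by (simp add: AB)
  also have "\<dots> = B" using inv by (simp add: matrix_mul_assoc)
  finally show ?thesis .
qed

lemma matrix_inv_orthogonal: "orthogonal_matrix (k::real^'n^'n) \<Longrightarrow> matrix_inv k = transpose k"
  by (rule matrix_inv_eqI) (auto simp: orthogonal_matrix_def)

lemma orthogonal_matrix_cancel:
  assumes "orthogonal_matrix (k::real^'n^'n)"
  shows "transpose k ** (k ** x) = x" "k ** (transpose k ** x) = x"
  using assms by (simp_all add: orthogonal_matrix_def matrix_mul_assoc)

lemma orthogonal_matrix_inner: "orthogonal_matrix (k::real^'n^'n) \<Longrightarrow> (k *v x) \<bullet> (k *v y) = x \<bullet> y"
  using orthogonal_transformation_matrix[of "\<lambda>x. k *v x"]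
  by (simp add: matrix_vector_mul_linear orthogonal_transformation_def)

lemma orthogonal_matrix_norm: "orthogonal_matrix (k::real^'n^'n) \<Longrightarrow> norm (k *v x) = norm x"
  using orthogonal_matrix_inner[of k x x] by (simp add: norm_eq_sqrt_inner)

lemma permutes_ge_imp_id:
  fixes p :: "'a::{finite,linorder} \<Rightarrow> 'a"
  assumes p: "p permutes UNIV" and ge: "\<And>i. i \<le> p i"
  shows "p = id"
proof (rule ccontr)
  assume "p \<noteq> id"
  then have ne: "{i. p i \<noteq> i} \<noteq> {}" by auto
  define m where "m = Max {i. p i \<noteq> i}"
  have m: "p m \<noteq> m" using Max_in[OF _ ne] m_def by auto
  then have "p (p m) \<noteq> p m" using p by (metis permutes_inj injD)
  then have "p m \<le> m" using m_def by (simp add: Max_ge)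
  with ge[of m] m show False by auto
qed

lemma det_upperdiagonal_linorder:
  fixes A :: "((real, 'n::{finite,linorder}) vec, 'n) vec"
  assumes "\<And>i j. j < i \<Longrightarrow> A$i$j = 0"
  shows "det A = (\<Prod>i\<in>UNIV. A$i$i)"
proof -
  let ?pp = "\<lambda>p. of_int (sign p) * (\<Prod>i\<in>UNIV. A$i$p i)"
  have "?pp p = 0" if p: "p permutes UNIV" "p \<noteq> id" for p
  proof -
    obtain i where "p i < i" using permutes_ge_imp_id[OF p(1)] p(2) by (meson not_le)
    then show ?thesis using assms by (auto intro!: prod_zero)
  qed
  then have "det A = (\<Sum>p\<in>{id}. ?pp p)"
    unfolding det_def by (intro sum.mono_neutral_right) (auto simp: permutes_id)
  then show ?thesis by (simp add: sign_id)
qed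

lemma continuous_on_det [continuous_intros]:
  "continuous_on S (f :: 'a::topological_space \<Rightarrow> real^'n^'n) \<Longrightarrow> continuous_on S (\<lambda>x. det (f x))"
  unfolding det_def by (intro continuous_intros)

lemma continuous_on_block_det [continuous_intros]:
  "continuous_on S (f :: 'a::topological_space \<Rightarrow> real^'n^'n) \<Longrightarrow> continuous_on S (\<lambda>x. block_det (f x) I)"
  unfolding block_det_def by (intro continuous_intros)

lemma continuous_on_matrix_mult [continuous_intros]:
  "continuous_on S (f :: 'a::topological_space \<Rightarrow> real^'n^'n) \<Longrightarrow> continuous_on S g
   \<Longrightarrow> continuous_on S (\<lambda>x. f x ** g x)"
  unfolding matrix_matrix_mult_def by (intro continuous_intros)

lemma connected_finite_range_eq:
  fixes f :: "'a::topological_space \<Rightarrow> real"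
  assumes "connected S" "continuous_on S f" "f ` S \<subseteq> F" "finite F" "a \<in> S" "b \<in> S"
  shows "f a = f b"
  using continuous_finite_range_constant_eq[of S] assms finite_subset
  by (metis constant_on_def)

section \<open>Plane rotations\<close>

definition plane_rotation :: "real^'n \<Rightarrow> real^'n \<Rightarrow> real \<Rightarrow> real^'n^'n" where
  "plane_rotation a b \<theta> = (\<chi> c d. (if c = d then 1 else 0) + (cos \<theta> - 1) * (a$c * a$d + b$c * b$d)
       + sin \<theta> * (b$c * a$d - a$c * b$d))"

lemma plane_rotation_apply:
  "plane_rotation a b \<theta> *v x = x + ((cos \<theta> - 1) * (a \<bullet> x) - sin \<theta> * (b \<bullet> x)) *\<^sub>R a
    + ((cos \<theta> - 1) * (b \<bullet> x) + sin \<theta> * (a \<bullet> x)) *\<^sub>R b"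
proof -
  have "(plane_rotation a b \<theta> *v x)$c = x$c + ((cos \<theta> - 1) * (a \<bullet> x) - sin \<theta> * (b \<bullet> x)) * a$c
    + ((cos \<theta> - 1) * (b \<bullet> x) + sin \<theta> * (a \<bullet> x)) * b$c" for c
  proof -
    have "(plane_rotation a b \<theta> *v x)$c = (\<Sum>d\<in>UNIV. (if c = d then x$d else 0)
        + (cos \<theta> - 1) * a$c * (a$d * x$d) + (cos \<theta> - 1) * b$c * (b$d * x$d)
        + sin \<theta> * b$c * (a$d * x$d) - sin \<theta> * a$c * (b$d * x$d))"
      unfolding plane_rotation_def matrix_vector_mult_def vec_lambda_beta
      by (rule sum.cong) (auto simp: algebra_simps)
    also have "\<dots> = x$c + (cos \<theta> - 1) * a$c * (a \<bullet> x) + (cos \<theta> - 1) * b$c * (b \<bullet> x)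
        + sin \<theta> * b$c * (a \<bullet> x) - sin \<theta> * a$c * (b \<bullet> x)"
      by (simp add: sum.distrib sum_subtractf sum_distrib_left[symmetric] inner_vec_def)
    finally show ?thesis by (simp add: algebra_simps)
  qed
  then show ?thesis by (simp add: vec_eq_iff)
qed

lemma plane_rotation_0 [simp]: "plane_rotation a b 0 = mat 1"
  by (simp add: plane_rotation_def mat_def vec_eq_iff)

lemma continuous_on_plane_rotation [continuous_intros]:
  fixes f :: "'a::t2_space \<Rightarrow> real"
  assumes "continuous_on S f"
  shows "continuous_on S (\<lambda>t. plane_rotation a b (f t))"
  unfolding plane_rotation_def by (intro continuous_intros assms)

lemma plane_rotation_first:
  assumes "a \<bullet> a = 1" "a \<bullet> b = 0"
  shows "plane_rotation a b \<theta> *v a = cos \<theta> *\<^sub>R a + sin \<theta> *\<^sub>R b"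
  using assms by (simp add: plane_rotation_apply inner_commute algebra_simps)

lemma plane_rotation_fixes: "a \<bullet> x = 0 \<Longrightarrow> b \<bullet> x = 0 \<Longrightarrow> plane_rotation a b \<theta> *v x = x"
  by (simp add: plane_rotation_apply)

lemma plane_rotation_nth_outside:
  assumes "a \<in> coordspace I" "b \<in> coordspace I" "c \<notin> I \<or> d \<notin> I"
  shows "plane_rotation a b \<theta> $ c $ d = (if c = d then 1 else 0)"
  using assms by (auto simp: plane_rotation_def coordspace_eq)

lemma orthogonal_matrix_plane_rotation:
  assumes a: "norm a = 1" and b: "norm b = 1" and ab: "a \<bullet> b = 0"
  shows "orthogonal_matrix (plane_rotation a b \<theta>)"
proof -
  have aa: "a \<bullet> a = 1" and bb: "b \<bullet> b = 1" using a b by (simp_all add: norm_eq_1)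
  have ba: "b \<bullet> a = 0" using ab by (simp add: inner_commute)
  have "norm (plane_rotation a b \<theta> *v x) = norm x" for x
  proof -
    define p where "p = a \<bullet> x"
    define q where "q = b \<bullet> x"
    define \<alpha> where "\<alpha> = (cos \<theta> - 1) * p - sin \<theta> * q"
    define \<beta> where "\<beta> = (cos \<theta> - 1) * q + sin \<theta> * p"
    have R: "plane_rotation a b \<theta> *v x = x + \<alpha> *\<^sub>R a + \<beta> *\<^sub>R b"
      unfolding plane_rotation_apply \<alpha>_def \<beta>_def p_def q_def ..
    have "(plane_rotation a b \<theta> *v x) \<bullet> (plane_rotation a b \<theta> *v x)
        = x \<bullet> x + (2 * \<alpha> * p + 2 * \<beta> * q + \<alpha>^2 + \<beta>^2)"
      unfolding R by (simp add: inner_add_left inner_add_right aa bb ab ba p_def q_def inner_commute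
          power2_eq_square algebra_simps)
    also have "2 * \<alpha> * p + 2 * \<beta> * q + \<alpha>^2 + \<beta>^2 = (p^2 + q^2) * ((sin \<theta>)^2 + (cos \<theta>)^2 - 1)"
      unfolding \<alpha>_def \<beta>_def power2_eq_square by algebra
    finally show ?thesis by (simp add: norm_eq_sqrt_inner)
  qed
  then show ?thesis
    using orthogonal_transformation_matrix[of "\<lambda>x. plane_rotation a b \<theta> *v x"]
    by (simp add: orthogonal_transformation matrix_vector_mul_linear)
qed

lemma det_plane_rotation:
  assumes "norm a = 1" "norm b = 1" "a \<bullet> b = 0"
  shows "det (plane_rotation a b \<theta>) = 1"
proof -
  have "det (plane_rotation a b 0) = det (plane_rotation a b \<theta>)"
  proof (rule connected_finite_range_eq[where f = "\<lambda>t. det (plane_rotation a b t)" and S = UNIV and F = "{-1, 1}"])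
    show "(\<lambda>t. det (plane_rotation a b t)) ` UNIV \<subseteq> {-1, 1}"
      using det_orthogonal_matrix[OF orthogonal_matrix_plane_rotation[OF assms]] by blast
  qed (auto intro!: continuous_intros)
  then show ?thesis by simp
qed

lemma plane_rotation_to_axis:
  fixes v :: "real^'n"
  assumes v1: "norm v = 1" and vne: "v \<noteq> axis j 1" "v \<noteq> - axis j 1"
  obtains b \<alpha> where "norm b = 1" "v \<bullet> b = 0" "plane_rotation v b \<alpha> *v v = axis j 1"
    "\<And>c. b$c \<noteq> 0 \<Longrightarrow> v$c \<noteq> 0 \<or> c = j"
proof -
  have vv: "v \<bullet> v = 1" using v1 by (simp add: norm_eq_1)
  define c0 where "c0 = v$j"
  have c0le: "\<bar>c0\<bar> \<le> 1" using component_le_norm_cart[of v j] v1 c0_def by simp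
  define w where "w = axis j 1 - c0 *\<^sub>R v"
  have vw: "v \<bullet> w = 0" by (simp add: w_def inner_diff_right vv inner_axis c0_def)
  have ww: "w \<bullet> w = 1 - c0^2"
    by (simp add: w_def inner_diff_left inner_diff_right vv inner_axis inner_axis' c0_def
        inner_axis_axis power2_eq_square inner_commute)
  have wnz: "w \<noteq> 0"
  proof
    assume w0: "w = 0"
    then have "c0 = 1 \<or> c0 = -1" using ww by (simp add: power2_eq_1_iff)
    moreover have "axis j 1 = c0 *\<^sub>R v" using w0 by (simp add: w_def)
    ultimately show False using vne by (auto simp: scaleR_left.minus)
  qed
  define b where "b = (1 / norm w) *\<^sub>R w"
  define \<alpha> where "\<alpha> = arccos c0"
  have vb: "v \<bullet> b = 0" using vw by (simp add: b_def)
  show ?thesis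
  proof (rule that[of b \<alpha>])
    show "norm b = 1" using wnz by (simp add: b_def)
    have "cos \<alpha> = c0" using c0le by (simp add: \<alpha>_def)
    moreover have "sin \<alpha> = norm w"
      using c0le ww by (simp add: \<alpha>_def sin_arccos norm_eq_sqrt_inner)
    ultimately have "plane_rotation v b \<alpha> *v v = c0 *\<^sub>R v + norm w *\<^sub>R b"
      using plane_rotation_first[OF vv vb] by simp
    also have "norm w *\<^sub>R b = w" using wnz by (simp add: b_def)
    finally show "plane_rotation v b \<alpha> *v v = axis j 1" by (simp add: w_def)
  qed (use vb in \<open>auto simp: b_def w_def axis_def split: if_splits\<close>)
qed

text \<open>When \<open>v = -e\<^sub>j\<close> the plane of \<open>v\<close> and \<open>e\<^sub>j\<close> is degenerate, and the half-turn
  uses the auxiliary coordinate \<open>t\<close> instead.\<close>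
lemma unit_vector_rotation_to_axis:
  fixes v :: "real^'n"
  assumes v1: "norm v = 1" and vne: "v \<noteq> axis j 1" and tj: "t \<noteq> j"
  obtains b \<alpha> where "norm b = 1" "v \<bullet> b = 0" "plane_rotation v b \<alpha> *v v = axis j 1"
    "\<And>c. b$c \<noteq> 0 \<Longrightarrow> v$c \<noteq> 0 \<or> c = j \<or> c = t"
proof (cases "v = - axis j 1")
  case True
  have vt: "v \<bullet> axis t 1 = 0" using True tj by (simp add: inner_axis_axis)
  show ?thesis
  proof (rule that[of "axis t 1" pi])
    show "norm (axis t (1::real)) = 1" by simp
    show "plane_rotation v (axis t 1) pi *v v = axis j 1"
      using plane_rotation_first[OF _ vt] v1 True by (simp add: norm_eq_1)
  qed (use vt in \<open>auto simp: axis_def split: if_splits\<close>)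
next
  case False
  then show ?thesis using plane_rotation_to_axis[OF v1 vne] that by metis
qed

lemma card_le_if_orthonormal_in_coordspace:
  fixes f :: "'a \<Rightarrow> real^'n"
  assumes orth: "\<And>a b. a \<in> A \<Longrightarrow> b \<in> A \<Longrightarrow> f a \<bullet> f b = (if a = b then 1 else 0)"
    and sub: "f ` A \<subseteq> coordspace S"
  shows "card A \<le> card S"
proof -
  have inj: "inj_on f A"
    by (rule inj_onI) (metis orth zero_neq_one)
  have "independent (f ` A)"
  proof (rule pairwise_orthogonal_independent)
    show "pairwise orthogonal (f ` A)"
      using orth by (auto simp: pairwise_def orthogonal_def)
    show "0 \<notin> f ` A" using orth by fastforce
  qed
  then have "card (f ` A) \<le> card ((\<lambda>i. axis i (1::real)) ` S)"
    using independent_span_bound[of "(\<lambda>i. axis i 1) ` S" "f ` A"] sub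
    by (simp add: coordspace_def)
  also have "\<dots> \<le> card S" by (rule card_image_le) simp
  finally show ?thesis using card_image[OF inj] by simp
qed

definition block_embed :: "real^'n^'n \<Rightarrow> 'n set \<Rightarrow> real^'n^'n" where
  "block_embed k I = (\<chi> c d. if c \<in> I \<and> d \<in> I then k$c$d else (if c = d then 1 else 0))"

lemma det_block_embed: "det (block_embed k I) = block_det k I"
proof -
  let ?E = "block_embed k I"
  let ?f = "\<lambda>p. of_int (sign p) * (\<Prod>i\<in>UNIV. ?E$i$p i)"
  have "?f p = 0" if p: "p permutes UNIV" "\<not> p permutes I" for p
  proof -
    obtain x where "x \<notin> I" "p x \<noteq> x" using p unfolding permutes_def by blast
    then have "?E$x$p x = 0" by (simp add: block_embed_def)
    then show ?thesis by (auto intro!: prod_zero)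
  qed
  then have "det ?E = (\<Sum>p | p permutes I. ?f p)"
    unfolding det_def by (intro sum.mono_neutral_right) (auto intro: permutes_subset)
  also have "\<dots> = (\<Sum>p | p permutes I. of_int (sign p) * (\<Prod>i\<in>I. k$i$p i))"
  proof (rule sum.cong[OF refl])
    fix p assume "p \<in> {p. p permutes I}"
    then have p: "p permutes I" by simp
    have "(\<Prod>i\<in>UNIV. ?E$i$p i) = (\<Prod>i\<in>I. ?E$i$p i)"
      by (rule prod.mono_neutral_right) (auto simp: block_embed_def permutes_not_in[OF p])
    also have "\<dots> = (\<Prod>i\<in>I. k$i$p i)"
      by (rule prod.cong[OF refl]) (simp add: block_embed_def permutes_in_image[OF p])
    finally show "?f p = of_int (sign p) * (\<Prod>i\<in>I. k$i$p i)" by simp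
  qed
  finally show ?thesis by (simp add: block_det_def)
qed

lemma block_embed_mult:
  assumes "\<And>c l. c \<in> I \<Longrightarrow> l \<notin> I \<Longrightarrow> a$c$l = 0"
  shows "block_embed (a ** b) I = block_embed a I ** block_embed b I"
proof -
  have "(block_embed a I ** block_embed b I)$c$d = block_embed (a ** b) I $c$d" for c d
  proof (cases "c \<in> I")
    case False
    then have "(block_embed a I ** block_embed b I)$c$d = block_embed b I $c$d"
      unfolding matrix_mult_nth by (subst sum_UNIV_eq_single[where i = c]) (auto simp: block_embed_def)
    then show ?thesis using False by (simp add: block_embed_def)
  next
    case True
    have "(block_embed a I ** block_embed b I)$c$d
        = (\<Sum>l\<in>UNIV. if l \<in> I \<and> d \<in> I then a$c$l * b$l$d else 0)"
      unfolding matrix_mult_nth using True by (intro sum.cong) (auto simp: block_embed_def)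
    also have "\<dots> = (if d \<in> I then (a ** b)$c$d else 0)"
      unfolding matrix_mult_nth using assms[OF True] by (auto intro!: sum.cong)
    finally show ?thesis using True by (auto simp: block_embed_def)
  qed
  then show ?thesis by (simp add: vec_eq_iff)
qed

lemma block_det_mult:
  assumes "\<And>c l. c \<in> I \<Longrightarrow> l \<notin> I \<Longrightarrow> a$c$l = 0"
  shows "block_det (a ** b) I = block_det a I * block_det b I"
  using block_embed_mult[OF assms, where b = b] by (metis det_block_embed det_mul)

lemma block_embed_eq_self:
  assumes "\<And>c d. c \<notin> I \<or> d \<notin> I \<Longrightarrow> k$c$d = (if c = d then 1 else 0)"
  shows "block_embed k I = k"
  using assms by (simp add: block_embed_def vec_eq_iff)

lemma block_det_eq_1:
  assumes "\<And>c d. c \<in> I \<Longrightarrow> d \<in> I \<Longrightarrow> k$c$d = (if c = d then 1 else 0)"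
  shows "block_det k I = 1"
proof -
  have "block_embed k I = mat 1" using assms by (simp add: block_embed_def vec_eq_iff mat_1_nth)
  then show ?thesis by (metis det_I det_block_embed)
qed

lemma orthogonal_matrix_block_embed:
  assumes o: "orthogonal_matrix k" and z: "\<And>c l. c \<in> I \<Longrightarrow> l \<notin> I \<Longrightarrow> k$l$c = 0"
  shows "orthogonal_matrix (block_embed k I)"
proof -
  let ?E = "block_embed k I"
  have kk: "(\<Sum>l\<in>UNIV. k$l$c * k$l$d) = (if c = d then 1 else 0)" for c d
    using o by (simp add: orthogonal_matrix_iff_sum)
  have "(\<Sum>l\<in>UNIV. ?E$l$c * ?E$l$d) = (if c = d then 1 else 0)" for c d
  proof (cases "c \<in> I \<and> d \<in> I")
    case True
    then have "(\<Sum>l\<in>UNIV. ?E$l$c * ?E$l$d) = (\<Sum>l\<in>UNIV. k$l$c * k$l$d)"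
      using z by (intro sum.cong) (auto simp: block_embed_def)
    then show ?thesis using kk by simp
  next
    case False
    then consider "c \<notin> I" | "d \<notin> I" by blast
    then show ?thesis
    proof cases
      case 1
      then have "(\<Sum>l\<in>UNIV. ?E$l$c * ?E$l$d) = ?E$c$d"
        by (subst sum_UNIV_eq_single[where i = c]) (auto simp: block_embed_def)
      then show ?thesis using 1 z[of d c] by (auto simp: block_embed_def)
    next
      case 2
      then have "(\<Sum>l\<in>UNIV. ?E$l$c * ?E$l$d) = ?E$d$c"
        by (subst sum_UNIV_eq_single[where i = d]) (auto simp: block_embed_def)
      then show ?thesis using 2 z[of c d] by (auto simp: block_embed_def)
    qed
  qed
  then show ?thesis by (simp add: orthogonal_matrix_iff_sum)
qed

lemma SON_mult: "a \<in> SON \<Longrightarrow> b \<in> SON \<Longrightarrow> a ** b \<in> SON"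
  by (simp add: SON_def orthogonal_matrix_mul det_mul)

lemma SON_transpose: "a \<in> SON \<Longrightarrow> transpose a \<in> SON"
  by (simp add: SON_def)

lemma mat_1_in_SON: "mat 1 \<in> SON"
  by (simp add: SON_def orthogonal_matrix_id)

lemma Union_lcosetK: "\<Union> (lcosetK ` A) = setmul A SON"
  unfolding lcosetK_def setmul_def by blast

lemma lcosetK_eq_if_mem:
  assumes "x \<in> lcosetK a"
  shows "lcosetK x = lcosetK a"
proof -
  obtain q where q: "q \<in> SON" "x = a ** q" using assms by (auto simp: lcosetK_def)
  have "(\<lambda>k. q ** k) ` SON = SON"
  proof
    show "SON \<subseteq> (\<lambda>k. q ** k) ` SON"
    proof
      fix k :: "real^'a^'a" assume k: "k \<in> SON"
      have "k = q ** (transpose q ** k)"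
        using q(1) by (simp add: SON_def orthogonal_matrix_def matrix_mul_assoc)
      then show "k \<in> (\<lambda>k. q ** k) ` SON" using SON_mult SON_transpose q(1) k by blast
    qed
  qed (use SON_mult q(1) in auto)
  moreover have "lcosetK x = (\<lambda>k. a ** k) ` ((\<lambda>k. q ** k) ` SON)"
    unfolding lcosetK_def q(2) image_image by (simp add: matrix_mul_assoc)
  ultimately show ?thesis by (simp add: lcosetK_def)
qed

lemma image_lcosetK_eq_iff: "lcosetK ` A = lcosetK ` B \<longleftrightarrow> setmul A SON = setmul B SON"
proof -
  have reduce: "lcosetK ` A = lcosetK ` setmul A SON" for A :: "(real^'a^'a) set"
  proof
    show "lcosetK ` A \<subseteq> lcosetK ` setmul A SON"
    proof
      fix C assume "C \<in> lcosetK ` A"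
      then obtain a where "a \<in> A" "C = lcosetK (a ** mat 1)" by auto
      moreover have "a ** mat 1 \<in> setmul A SON"
        using \<open>a \<in> A\<close> mat_1_in_SON unfolding setmul_def by blast
      ultimately show "C \<in> lcosetK ` setmul A SON" by blast
    qed
    show "lcosetK ` setmul A SON \<subseteq> lcosetK ` A"
    proof
      fix C assume "C \<in> lcosetK ` setmul A SON"
      then obtain a q where "a \<in> A" "q \<in> SON" "C = lcosetK (a ** q)"
        unfolding setmul_def by blast
      moreover have "a ** q \<in> lcosetK a" using \<open>q \<in> SON\<close> by (simp add: lcosetK_def)
      ultimately show "C \<in> lcosetK ` A" using lcosetK_eq_if_mem by blast
    qed
  qed
  show ?thesis
  proof
    assume "lcosetK ` A = lcosetK ` B"
    then show "setmul A SON = setmul B SON" unfolding Union_lcosetK[symmetric] by simp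
  qed (use reduce[of A] reduce[of B] in simp)
qed

lemma setmul_left_mult: "setmul ((\<lambda>x. g ** x) ` A) B = (\<lambda>x. g ** x) ` setmul A B"
proof
  show "setmul ((\<lambda>x. g ** x) ` A) B \<subseteq> (\<lambda>x. g ** x) ` setmul A B"
  proof
    fix x assume "x \<in> setmul ((\<lambda>x. g ** x) ` A) B"
    then obtain a b where "a \<in> A" "b \<in> B" "x = g ** (a ** b)"
      unfolding setmul_def by (auto simp: matrix_mul_assoc)
    then show "x \<in> (\<lambda>x. g ** x) ` setmul A B" unfolding setmul_def by blast
  qed
  show "(\<lambda>x. g ** x) ` setmul A B \<subseteq> setmul ((\<lambda>x. g ** x) ` A) B"
  proof
    fix x assume "x \<in> (\<lambda>x. g ** x) ` setmul A B"
    then obtain a b where "a \<in> A" "b \<in> B" "x = (g ** a) ** b"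
      unfolding setmul_def by (auto simp: matrix_mul_assoc)
    then show "x \<in> setmul ((\<lambda>x. g ** x) ` A) B" unfolding setmul_def by blast
  qed
qed

lemma image_left_mult_mult: "(\<lambda>x. (a ** b) ** x) ` S = (\<lambda>x. a ** x) ` (\<lambda>x. b ** x) ` S"
  by (simp add: image_image matrix_mul_assoc)

lemma G_hor_eq_stabilizer:
  "G_hor P = {g \<in> SLN. (\<lambda>x. g ** x) ` setmul (U_part P) SON = setmul (U_part P) SON}"
proof -
  have "(\<lambda>h. lcosetK (g ** h)) ` U_part P = lcosetK ` ((\<lambda>h. g ** h) ` U_part P)" for g
    by (simp add: image_image)
  then show ?thesis
    by (simp add: G_hor_def image_lcosetK_eq_iff setmul_left_mult)
qed

locale consecutive_blocks =
  fixes P :: "('n::{finite,linorder}) set set"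
  assumes consecutive: "consecutive_partition P"
begin

lemma partition: "partition_on UNIV P"
  using consecutive by (simp add: consecutive_partition_def)

definition block_of :: "'n \<Rightarrow> 'n set" where
  "block_of i = (THE I. I \<in> P \<and> i \<in> I)"

lemma ex1_block: "\<exists>!I. I \<in> P \<and> i \<in> I"
proof -
  obtain I where "I \<in> P" "i \<in> I" using partition_onD1[OF partition] by blast
  moreover have "J = I" if "J \<in> P" "i \<in> J" for J
    using disjointD[OF partition_onD2[OF partition]] calculation that by blast
  ultimately show ?thesis by blast
qed

lemma block_of_in: "block_of i \<in> P" and mem_block_of: "i \<in> block_of i"
  using theI'[OF ex1_block[of i]] by (auto simp: block_of_def)

lemma block_of_eq: "I \<in> P \<Longrightarrow> i \<in> I \<Longrightarrow> block_of i = I"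
  using ex1_block[of i] block_of_in[of i] mem_block_of[of i] by blast

lemma block_of_eq_iff: "block_of i = block_of j \<longleftrightarrow> i \<in> block_of j"
  by (metis block_of_eq block_of_in mem_block_of)

definition block_less :: "'n \<Rightarrow> 'n \<Rightarrow> bool" where
  "block_less i j \<longleftrightarrow> block_before (block_of i) (block_of j)"

lemma block_less_imp_less: "block_less i j \<Longrightarrow> i < j"
  using mem_block_of by (auto simp: block_less_def block_before_def)

lemma block_less_irrefl: "\<not> block_less i i"
  using block_less_imp_less by blast

lemma block_less_imp_neq: "block_less i j \<Longrightarrow> block_of i \<noteq> block_of j"
  using block_less_irrefl by (auto simp: block_less_def)

lemma block_less_asym: "block_less i j \<Longrightarrow> \<not> block_less j i"
  using block_less_imp_less less_asym by blast

lemma block_less_linear: "block_of i \<noteq> block_of j \<Longrightarrow> block_less i j \<or> block_less j i"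
  using consecutive block_of_in by (auto simp: consecutive_partition_def block_less_def)

lemma block_less_trans: "block_less i j \<Longrightarrow> block_less j l \<Longrightarrow> block_less i l"
  using mem_block_of[of j] by (auto simp: block_less_def block_before_def) (meson less_trans)

lemma block_less_if_not_after:
  assumes "block_less j i" "\<not> block_less j m"
  shows "block_less m i"
proof (cases "block_of m = block_of j")
  case True
  then show ?thesis using assms(1) by (simp add: block_less_def)
next
  case False
  then show ?thesis using assms block_less_linear block_less_trans by blast
qed

lemma block_less_cong: "block_of i = block_of i' \<Longrightarrow> block_of j = block_of j' \<Longrightarrow> block_less i j = block_less i' j'"
  by (simp add: block_less_def)

lemma Union_blocks_before: "\<Union>{J\<in>P. block_before J (block_of j)} = {i. block_less i j}"
proof (intro set_eqI iffI)
  fix x assume "x \<in> \<Union>{J\<in>P. block_before J (block_of j)}"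
  then obtain J where "J \<in> P" "block_before J (block_of j)" "x \<in> J" by blast
  then show "x \<in> {i. block_less i j}" by (simp add: block_less_def block_of_eq)
qed (use block_of_in mem_block_of in \<open>auto simp: block_less_def\<close>)

lemma forall_block: "(\<forall>I\<in>P. Q I) \<longleftrightarrow> (\<forall>j. Q (block_of j))"
  using block_of_in block_of_eq partition_onD3[OF partition] by (metis ex_in_conv)

definition block_unitriangular :: "((real, 'n) vec, 'n) vec \<Rightarrow> bool" where
  "block_unitriangular g \<longleftrightarrow> (\<forall>i. g$i$i = 1) \<and> (\<forall>i j. i \<noteq> j \<and> \<not> block_less i j \<longrightarrow> g$i$j = 0)"

definition block_diagonal :: "((real, 'n) vec, 'n) vec \<Rightarrow> bool" where
  "block_diagonal k \<longleftrightarrow> (\<forall>i j. k$i$j \<noteq> 0 \<longrightarrow> block_of i = block_of j)"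

lemma block_unitriangularD:
  "block_unitriangular g \<Longrightarrow> g$i$i = 1"
  "block_unitriangular g \<Longrightarrow> g$i$j \<noteq> 0 \<Longrightarrow> i = j \<or> block_less i j"
  by (auto simp: block_unitriangular_def)

lemma block_diagonalD: "block_diagonal k \<Longrightarrow> k$i$j \<noteq> 0 \<Longrightarrow> block_of i = block_of j"
  by (simp add: block_diagonal_def)

lemma det_block_unitriangular:
  assumes g: "block_unitriangular g"
  shows "det g = 1"
proof -
  have "det g = (\<Prod>i\<in>UNIV. g$i$i)"
    by (rule det_upperdiagonal_linorder)
      (use block_unitriangularD(2)[OF g] block_less_imp_less in \<open>fastforce\<close>)
  then show ?thesis by (simp add: block_unitriangularD(1)[OF g])
qed

lemma diff_image_coordspace_block_subset_iff:
  "(\<lambda>x. x - g *v x) ` coordspace (block_of j) \<subseteq> coordspace {i. block_less i j}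
    \<longleftrightarrow> (\<forall>i. \<not> block_less i j \<longrightarrow> (\<forall>l\<in>block_of j. g$i$l = (if i = l then 1 else 0)))"
proof
  assume sub: "(\<lambda>x. x - g *v x) ` coordspace (block_of j) \<subseteq> coordspace {i. block_less i j}"
  show "\<forall>i. \<not> block_less i j \<longrightarrow> (\<forall>l\<in>block_of j. g$i$l = (if i = l then 1 else 0))"
  proof (intro allI impI ballI)
    fix i l assume i: "\<not> block_less i j" and l: "l \<in> block_of j"
    have "axis l 1 \<in> coordspace (block_of j)" using l by (auto simp: coordspace_eq axis_def)
    then have "axis l 1 - g *v axis l 1 \<in> coordspace {i. block_less i j}" using sub by blast
    then have "(axis l 1 - g *v axis l 1)$i = 0" using i by (simp add: coordspace_eq)
    then show "g$i$l = (if i = l then 1 else 0)" by (simp add: axis_nth_if)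
  qed
next
  assume g: "\<forall>i. \<not> block_less i j \<longrightarrow> (\<forall>l\<in>block_of j. g$i$l = (if i = l then 1 else 0))"
  show "(\<lambda>x. x - g *v x) ` coordspace (block_of j) \<subseteq> coordspace {i. block_less i j}"
  proof (clarsimp simp: coordspace_eq)
    fix x :: "(real, 'n) vec" and i assume x: "\<forall>l. l \<notin> block_of j \<longrightarrow> x$l = 0" and i: "\<not> block_less i j"
    have "(g *v x)$i = (\<Sum>l\<in>UNIV. if l = i then x$l else 0)"
      unfolding matrix_vector_mult_def vec_lambda_beta
    proof (rule sum.cong[OF refl])
      fix l
      show "g$i$l * x$l = (if l = i then x$l else 0)"
        by (cases "l \<in> block_of j") (use g i x in auto)
    qed
    then show "x$i = (g *v x)$i" by simp
  qed
qed

lemma U_part_eq: "U_part P = {g. block_unitriangular g}"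
proof -
  have "g \<in> U_part P \<longleftrightarrow> block_unitriangular g" for g
  proof -
    have "(\<forall>I\<in>P. (\<lambda>x. x - g *v x) ` coordspace I \<subseteq> coordspace (\<Union>{J\<in>P. block_before J I}))
        \<longleftrightarrow> (\<forall>j. (\<lambda>x. x - g *v x) ` coordspace (block_of j) \<subseteq> coordspace {i. block_less i j})"
      unfolding forall_block Union_blocks_before ..
    also have "\<dots> \<longleftrightarrow> block_unitriangular g"
      unfolding diff_image_coordspace_block_subset_iff
    proof (intro iffI allI impI ballI)
      assume H: "\<forall>j i. \<not> block_less i j \<longrightarrow> (\<forall>l\<in>block_of j. g$i$l = (if i = l then 1 else 0))"
      have "g$i$i = 1" for i using H[rule_format, of i i i] block_less_irrefl mem_block_of by simp
      moreover have "g$i$j = 0" if "i \<noteq> j" "\<not> block_less i j" for i j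
        using H[rule_format, of i j j] that mem_block_of by simp
      ultimately show "block_unitriangular g" by (simp add: block_unitriangular_def)
    next
      fix j i l assume g: "block_unitriangular g" and i: "\<not> block_less i j" and l: "l \<in> block_of j"
      then have "\<not> block_less i l" using block_less_cong block_of_eq_iff by blast
      then show "g$i$l = (if i = l then 1 else 0)" using g by (simp add: block_unitriangular_def)
    qed
    finally show ?thesis
      using det_block_unitriangular by (auto simp: U_part_def SLN_def)
  qed
  then show ?thesis by blast
qed

lemma block_unitriangular_mat_1: "block_unitriangular (mat 1)"
  by (simp add: block_unitriangular_def mat_1_nth)

lemma block_unitriangular_mult:
  assumes a: "block_unitriangular a" and b: "block_unitriangular b"
  shows "block_unitriangular (a ** b)"
  unfolding block_unitriangular_def
proof (intro conjI allI impI)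
  fix i
  have "(a ** b)$i$i = a$i$i * b$i$i" unfolding matrix_mult_nth
  proof (rule sum_UNIV_eq_single)
    fix l assume "l \<noteq> i"
    then show "a$i$l * b$l$i = 0"
      using block_unitriangularD(2)[OF a, of i l] block_unitriangularD(2)[OF b, of l i] block_less_asym
      by auto
  qed
  then show "(a ** b)$i$i = 1" using a b by (simp add: block_unitriangularD(1))
next
  fix i j assume ij: "i \<noteq> j \<and> \<not> block_less i j"
  have "a$i$l * b$l$j = 0" for l
    using block_unitriangularD(2)[OF a, of i l] block_unitriangularD(2)[OF b, of l j] ij block_less_trans
    by auto
  then show "(a ** b)$i$j = 0" unfolding matrix_mult_nth by (intro sum.neutral ballI)
qed

text \<open>Row \<open>c\<close> of a right inverse is determined by the rows of later blocks, hence the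
  downward induction on \<open>c\<close>.\<close>
lemma block_unitriangular_right_inverse:
  assumes a: "block_unitriangular a" and av: "a ** v = mat 1"
  shows "block_unitriangular v"
proof -
  have "\<forall>d. \<not> block_less c d \<longrightarrow> v$c$d = (if c = d then 1 else 0)" for c
  proof (induct "card {e. c < e}" arbitrary: c rule: less_induct)
    case less
    show ?case
    proof (intro allI impI)
      fix d assume cd: "\<not> block_less c d"
      have "(a ** v)$c$d = v$c$d"
        unfolding matrix_mult_nth
      proof (subst sum_UNIV_eq_single[where i = c])
        fix e assume ec: "e \<noteq> c"
        show "a$c$e * v$e$d = 0"
        proof (cases "a$c$e = 0")
          case False
          then have ce: "block_less c e" using block_unitriangularD(2)[OF a] ec by blast
          have card_lt: "card {e'. e < e'} < card {e'. c < e'}"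
            using block_less_imp_less[OF ce] by (intro psubset_card_mono) auto
          have "\<not> block_less e d" using ce cd block_less_trans by blast
          then have "v$e$d = (if e = d then 1 else 0)" using less(1)[OF card_lt] by blast
          then show ?thesis using ce cd by auto
        qed simp
      qed (simp add: block_unitriangularD(1)[OF a])
      then show "v$c$d = (if c = d then 1 else 0)" using av by (simp add: mat_1_nth)
    qed
  qed
  then show ?thesis unfolding block_unitriangular_def using block_less_irrefl by auto
qed

lemma block_unitriangular_inverse:
  assumes u: "block_unitriangular u"
  obtains v where "block_unitriangular v" "u ** v = mat 1" "v ** u = mat 1"
proof -
  have "invertible u" using det_block_unitriangular[OF u] by (simp add: invertible_det_nz)
  then obtain v where "u ** v = mat 1" "v ** u = mat 1" by (auto simp: invertible_def)
  then show ?thesis using that block_unitriangular_right_inverse[OF u] by blast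
qed

lemma block_unitriangular_segment:
  "block_unitriangular u \<Longrightarrow> block_unitriangular (mat 1 + t *\<^sub>R (u - mat 1))"
  by (auto simp: block_unitriangular_def mat_1_nth)

lemma block_diagonal_mat_1: "block_diagonal (mat 1)"
  by (simp add: block_diagonal_def mat_1_nth)

lemma block_diagonal_transpose: "block_diagonal a \<Longrightarrow> block_diagonal (transpose a)"
  by (auto simp: block_diagonal_def transpose_def)

lemma block_diagonal_mult:
  assumes "block_diagonal a" "block_diagonal b"
  shows "block_diagonal (a ** b)"
  unfolding block_diagonal_def matrix_mult_nth
proof (intro allI impI)
  fix i j assume "(\<Sum>l\<in>UNIV. a$i$l * b$l$j) \<noteq> 0"
  then obtain l where "a$i$l * b$l$j \<noteq> 0"
    using sum.neutral[of UNIV "\<lambda>l. a$i$l * b$l$j"] by blast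
  then show "block_of i = block_of j"
    using block_diagonalD[OF assms(1), of i l] block_diagonalD[OF assms(2), of l j] by auto
qed

lemma block_unitriangular_conj:
  assumes a: "block_diagonal a" and b: "block_diagonal b" and ab: "a ** b = mat 1"
    and u: "block_unitriangular u"
  shows "block_unitriangular (a ** u ** b)"
proof -
  have "(a ** u ** b)$c$d = (if c = d then 1 else 0)" if cd: "\<not> block_less c d" for c d
  proof -
    have "a$c$e * u$e$f * b$f$d = (if e = f then a$c$e * b$e$d else 0)" for e f
    proof (cases "a$c$e = 0 \<or> b$f$d = 0 \<or> e = f")
      case False
      then have "block_of c = block_of e" "block_of f = block_of d"
        using block_diagonalD[OF a] block_diagonalD[OF b] by blast+
      then have "\<not> block_less e f" using cd block_less_cong by blast
      then show ?thesis using block_unitriangularD(2)[OF u, of e f] False by auto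
    qed (auto simp: block_unitriangularD(1)[OF u])
    then have "(a ** u ** b)$c$d = (\<Sum>f\<in>UNIV. \<Sum>e\<in>UNIV. if e = f then a$c$e * b$e$d else 0)"
      by (simp add: matrix_mult_nth sum_distrib_right)
    also have "\<dots> = (\<Sum>e\<in>UNIV. a$c$e * b$e$d)" by simp
    also have "\<dots> = (a ** b)$c$d" by (simp add: matrix_mult_nth)
    finally show ?thesis using ab by (simp add: mat_1_nth)
  qed
  then show ?thesis unfolding block_unitriangular_def using block_less_irrefl by auto
qed

lemma block_diagonal_conj_image:
  assumes k: "k \<in> SON" "block_diagonal k"
  shows "(\<lambda>u. k ** u ** transpose k) ` U_part P = U_part P"
proof -
  have o: "orthogonal_matrix k" using k by (simp add: SON_def)
  have kt: "block_diagonal (transpose k)" using block_diagonal_transpose[OF k(2)] .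
  show ?thesis
  proof
    show "(\<lambda>u. k ** u ** transpose k) ` U_part P \<subseteq> U_part P"
      using block_unitriangular_conj[OF k(2) kt] o by (auto simp: U_part_eq orthogonal_matrix_def)
    show "U_part P \<subseteq> (\<lambda>u. k ** u ** transpose k) ` U_part P"
    proof
      fix v assume "v \<in> U_part P"
      then have "transpose k ** v ** k \<in> U_part P"
        using block_unitriangular_conj[OF kt k(2)] o by (auto simp: U_part_eq orthogonal_matrix_def)
      moreover have "k ** (transpose k ** v ** k) ** transpose k
          = (k ** transpose k) ** v ** (k ** transpose k)"
        by (simp add: matrix_mul_assoc)
      then have "v = k ** (transpose k ** v ** k) ** transpose k"
        using o by (simp add: orthogonal_matrix_def)
      ultimately show "v \<in> (\<lambda>u. k ** u ** transpose k) ` U_part P" by blast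
    qed
  qed
qed

section \<open>The normalizer of U\<close>

definition UK :: "((real, 'n) vec, 'n) vec set" where
  "UK = setmul (U_part P) SON"

lemma UK_iff: "x \<in> UK \<longleftrightarrow> (\<exists>h q. block_unitriangular h \<and> q \<in> SON \<and> x = h ** q)"
  unfolding UK_def setmul_def U_part_eq by blast

lemma UK_I: "block_unitriangular h \<Longrightarrow> q \<in> SON \<Longrightarrow> h ** q \<in> UK"
  unfolding UK_iff by blast

lemma block_unitriangular_in_UK: "block_unitriangular h \<Longrightarrow> h \<in> UK"
  using UK_I[OF _ mat_1_in_SON] by simp

lemma block_unitriangular_left_mult_UK:
  assumes u: "block_unitriangular u"
  shows "(\<lambda>x. u ** x) ` UK = UK"
proof
  show "(\<lambda>x. u ** x) ` UK \<subseteq> UK"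
  proof clarify
    fix x assume "x \<in> UK"
    then obtain h q where h: "block_unitriangular h" "q \<in> SON" "x = h ** q" unfolding UK_iff by blast
    have "u ** x = (u ** h) ** q" using h(3) by (simp add: matrix_mul_assoc)
    then show "u ** x \<in> UK" using UK_I[OF block_unitriangular_mult[OF u h(1)] h(2)] by simp
  qed
  show "UK \<subseteq> (\<lambda>x. u ** x) ` UK"
  proof
    fix x assume "x \<in> UK"
    then obtain h q where h: "block_unitriangular h" "q \<in> SON" "x = h ** q" unfolding UK_iff by blast
    obtain v where v: "block_unitriangular v" "u ** v = mat 1"
      using block_unitriangular_inverse[OF u] by blast
    have "x = u ** ((v ** h) ** q)" using h(3) v(2) by (simp add: matrix_mul_assoc)
    moreover have "(v ** h) ** q \<in> UK" using UK_I[OF block_unitriangular_mult[OF v(1) h(1)] h(2)] .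
    ultimately show "x \<in> (\<lambda>x. u ** x) ` UK" by blast
  qed
qed

lemma conj_invariant_left_mult_UK:
  assumes k: "k \<in> SON" and inv: "(\<lambda>u. k ** u ** transpose k) ` U_part P = U_part P"
  shows "(\<lambda>x. k ** x) ` UK = UK"
proof -
  have o: "orthogonal_matrix k" using k by (simp add: SON_def)
  show ?thesis
  proof
    show "(\<lambda>x. k ** x) ` UK \<subseteq> UK"
    proof clarify
      fix x assume "x \<in> UK"
      then obtain u q where u: "u \<in> U_part P" "q \<in> SON" "x = u ** q" by (auto simp: UK_iff U_part_eq)
      have "k ** x = (k ** u ** transpose k) ** (k ** q)"
        using u(3) by (simp add: matrix_mul_assoc[symmetric] orthogonal_matrix_cancel[OF o])
      moreover have "k ** u ** transpose k \<in> U_part P" using inv u(1) by blast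
      ultimately show "k ** x \<in> UK" using UK_I SON_mult[OF k u(2)] by (simp add: U_part_eq)
    qed
    show "UK \<subseteq> (\<lambda>x. k ** x) ` UK"
    proof
      fix x assume "x \<in> UK"
      then obtain v q where v: "v \<in> U_part P" "q \<in> SON" "x = v ** q" by (auto simp: UK_iff U_part_eq)
      then obtain u where u: "u \<in> U_part P" "v = k ** u ** transpose k" using inv by blast
      have "x = k ** (u ** (transpose k ** q))" using u(2) v(3) by (simp add: matrix_mul_assoc)
      moreover have "u ** (transpose k ** q) \<in> UK"
        using u(1) UK_I SON_mult[OF SON_transpose[OF k] v(2)] by (simp add: U_part_eq)
      ultimately show "x \<in> (\<lambda>x. k ** x) ` UK" by blast
    qed
  qed
qed

text \<open>Since \<open>|h\<^sup>T x|\<^sup>2 = x\<^sup>T (h h\<^sup>T) x\<close> and \<open>g \<mapsto> g g\<^sup>T\<close> identifies \<open>G/K\<close> with positive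
  definite matrices, such bounds depend only on the horocycle \<open>U K/K\<close>; hence they are
  transported by every \<open>k\<close> mapping the horocycle into itself.\<close>
definition orbit_norm_bound :: "real \<Rightarrow> (real, 'n) vec \<Rightarrow> bool" where
  "orbit_norm_bound r z \<longleftrightarrow> (\<forall>h. block_unitriangular h \<longrightarrow> r \<le> norm (transpose h *v z))"

lemma shear_cancel:
  assumes za: "z$a \<noteq> 0" and y: "\<And>d. y$d \<noteq> 0 \<Longrightarrow> block_less a d"
  obtains h where "block_unitriangular h" "transpose h *v (z + y) = z"
proof -
  define h where "h = mat 1 - (\<chi> c d. if c = a then y$d / z$a else 0)"
  have ya: "y$a = 0" using y block_less_irrefl by blast
  have "block_unitriangular h"
    using y ya unfolding block_unitriangular_def h_def by (auto simp: mat_1_nth)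
  moreover have "(transpose h *v x)$d = x$d - y$d / z$a * x$a" for x d
  proof -
    have "(transpose h *v x)$d
        = (\<Sum>c\<in>UNIV. (if c = d then x$c else 0) - (if c = a then y$d / z$a * x$c else 0))"
      unfolding transpose_matrix_vector_nth h_def by (intro sum.cong) (auto simp: mat_1_nth algebra_simps)
    then show ?thesis by (simp add: sum_subtractf)
  qed
  then have "transpose h *v (z + y) = z" using za ya by (simp add: vec_eq_iff)
  ultimately show ?thesis using that by blast
qed

lemma orbit_norm_bound_single_block:
  assumes x: "x \<in> coordspace (block_of a)"
  shows "orbit_norm_bound (norm x) x"
  unfolding orbit_norm_bound_def
proof (intro allI impI norm_le_componentwise_cart)
  fix h d assume h: "block_unitriangular h"
  show "norm (x$d) \<le> norm ((transpose h *v x)$d)"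
  proof (cases "d \<in> block_of a")
    case True
    have "(transpose h *v x)$d = h$d$d * x$d" unfolding transpose_matrix_vector_nth
    proof (rule sum_UNIV_eq_single)
      fix c assume cd: "c \<noteq> d"
      show "h$c$d * x$c = 0"
      proof (cases "x$c = 0")
        case False
        then have "block_of c = block_of d" using x True block_of_eq_iff by (auto simp: coordspace_eq)
        then have "\<not> block_less c d" using block_less_imp_neq by blast
        then show ?thesis using block_unitriangularD(2)[OF h, of c d] cd by auto
      qed simp
    qed
    then show ?thesis using block_unitriangularD(1)[OF h] by simp
  next
    case False
    then show ?thesis using x by (simp add: coordspace_eq)
  qed
qed

lemma single_block_if_orbit_norm_bound:
  assumes x: "orbit_norm_bound (norm x) x" and xa: "x$a \<noteq> 0"
  shows "x \<in> coordspace (block_of a)"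
proof -
  have contra: False if ab: "block_less a b" and xa: "x$a \<noteq> 0" and xb: "x$b \<noteq> 0" for a b
  proof -
    define y where "y = (\<chi> d. if block_of d = block_of b then x$d else 0)"
    have "(x - y)$a \<noteq> 0" using xa block_less_imp_neq[OF ab] by (simp add: y_def)
    moreover have "y$d \<noteq> 0 \<Longrightarrow> block_less a d" for d
      using ab by (auto simp: y_def block_less_def split: if_splits)
    ultimately obtain h where "block_unitriangular h" "transpose h *v (x - y + y) = x - y"
      by (rule shear_cancel)
    then have "norm x \<le> norm (x - y)" using x unfolding orbit_norm_bound_def by (metis diff_add_cancel)
    moreover have "norm (x - y) < norm x"
      by (rule norm_less_if_coordinate_dropped[where b = b]) (use xb in \<open>auto simp: y_def\<close>)
    ultimately show False by simp
  qed
  have other_block: False if xb: "x$b \<noteq> 0" and ne: "block_of a \<noteq> block_of b" for b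
  proof (cases "block_less a b")
    case True
    then show False using xa xb by (rule contra)
  next
    case False
    then have "block_less b a" using block_less_linear[OF ne] by blast
    then show False using xb xa by (rule contra)
  qed
  show ?thesis unfolding coordspace_eq
  proof (intro CollectI allI impI)
    fix b assume "b \<notin> block_of a"
    then have "block_of a \<noteq> block_of b" using mem_block_of by metis
    then show "x$b = 0" using other_block by blast
  qed
qed

lemma orbit_norm_bound_axis_add:
  assumes li: "block_less l i"
  shows "orbit_norm_bound \<bar>t\<bar> (axis i 1 + t *\<^sub>R axis l 1)"
  unfolding orbit_norm_bound_def
proof (intro allI impI)
  fix h assume h: "block_unitriangular h"
  have "(transpose h *v (axis i 1 + t *\<^sub>R axis l 1))$l = h$i$l + t * h$l$l"
    by (simp add: matrix_vector_right_distrib matrix_vector_mult_scaleR transpose_def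
        del: transpose_matrix_vector)
  also have "\<dots> = t"
    using block_unitriangularD[OF h] block_less_asym[OF li] block_less_imp_neq[OF li] by fastforce
  finally show "\<bar>t\<bar> \<le> norm (transpose h *v (axis i 1 + t *\<^sub>R axis l 1))"
    by (metis component_le_norm_cart)
qed

lemma orbit_norm_bound_transport:
  assumes k: "\<And>h. block_unitriangular h \<Longrightarrow> k ** h \<in> UK" and z: "orbit_norm_bound r z"
  shows "orbit_norm_bound r (transpose k *v z)"
  unfolding orbit_norm_bound_def
proof (intro allI impI)
  fix h assume "block_unitriangular h"
  then obtain h' q where h': "block_unitriangular h'" "q \<in> SON" "k ** h = h' ** q"
    using k unfolding UK_iff by blast
  have "transpose h ** transpose k = transpose q ** transpose h'"
    by (metis matrix_transpose_mul h'(3))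
  then have "transpose h *v (transpose k *v z) = transpose q *v (transpose h' *v z)"
    by (simp add: matrix_vector_mul_assoc del: transpose_matrix_vector)
  then have "norm (transpose h *v (transpose k *v z)) = norm (transpose h' *v z)"
    using h'(2) by (simp add: orthogonal_matrix_norm SON_def del: transpose_matrix_vector)
  then show "r \<le> norm (transpose h *v (transpose k *v z))"
    using z h'(1) by (simp add: orbit_norm_bound_def del: transpose_matrix_vector)
qed

lemma column_single_block_if_left_mult_UK:
  assumes o: "orthogonal_matrix k" and k: "\<And>h. block_unitriangular h \<Longrightarrow> k ** h \<in> UK"
    and lm: "k$l$m \<noteq> 0"
  shows "transpose k *v axis l 1 \<in> coordspace (block_of m)"
proof (rule single_block_if_orbit_norm_bound)
  have "axis l 1 \<in> coordspace (block_of l)" by (simp add: coordspace_eq axis_def mem_block_of)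
  from orbit_norm_bound_transport[OF k orbit_norm_bound_single_block[OF this]]
  show "orbit_norm_bound (norm (transpose k *v axis l 1)) (transpose k *v axis l 1)"
    using orthogonal_matrix_norm[of "transpose k"] o by (simp del: transpose_matrix_vector)
  show "(transpose k *v axis l 1) $ m \<noteq> 0"
    using lm by (simp add: transpose_def del: transpose_matrix_vector)
qed

lemma column_not_after_if_left_mult_UK:
  assumes o: "orthogonal_matrix k" and k: "\<And>h. block_unitriangular h \<Longrightarrow> k ** h \<in> UK"
    and li: "block_less l i" and ij: "k$i$j \<noteq> 0" and lm: "k$l$m \<noteq> 0"
  shows "\<not> block_less j m"
proof
  assume jm: "block_less j m"
  define z where "z = transpose k *v axis i 1"
  define y where "y = transpose k *v axis l 1"
  have "orbit_norm_bound 2 (z + 2 *\<^sub>R y)"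
    using orbit_norm_bound_transport[OF k orbit_norm_bound_axis_add[OF li, of 2]]
    by (simp add: z_def y_def matrix_vector_right_distrib matrix_vector_mult_scaleR
        del: transpose_matrix_vector)
  moreover obtain h where "block_unitriangular h" "transpose h *v (z + 2 *\<^sub>R y) = z"
  proof (rule shear_cancel)
    show "z $ j \<noteq> 0" using ij by (simp add: z_def transpose_def del: transpose_matrix_vector)
    fix d assume "(2 *\<^sub>R y)$d \<noteq> 0"
    then have "block_of d = block_of m"
      using column_single_block_if_left_mult_UK[OF o k lm]
      by (auto simp: y_def coordspace_eq block_of_eq_iff)
    then show "block_less j d" using jm by (simp add: block_less_def)
  qed
  ultimately have "2 \<le> norm z" unfolding orbit_norm_bound_def by metis
  then show False
    using orthogonal_matrix_norm[of "transpose k"] o by (simp add: z_def del: transpose_matrix_vector)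
qed

text \<open>If \<open>k\<^sub>i\<^sub>j \<noteq> 0\<close> with \<open>j\<close> in an earlier block than \<open>i\<close>, the orthonormal vectors
  \<open>k\<^sup>T e\<^sub>l\<close>, for \<open>l = i\<close> and all \<open>l\<close> in blocks before \<open>i\<close>, all lie in the span of
  those blocks: one vector too many.\<close>
lemma block_upper_triangular_if_left_mult_UK:
  assumes o: "orthogonal_matrix k" and k: "\<And>h. block_unitriangular h \<Longrightarrow> k ** h \<in> UK"
    and ji: "block_less j i"
  shows "k$i$j = 0"
proof (rule ccontr)
  assume ij: "k$i$j \<noteq> 0"
  define S where "S = {l. block_less l i}"
  have "transpose k *v axis l 1 \<in> coordspace S" if l: "l \<in> insert i S" for l
    unfolding coordspace_eq
  proof (intro CollectI allI impI)
    fix m assume m: "m \<notin> S"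
    show "(transpose k *v axis l 1) $ m = 0"
    proof (rule ccontr)
      assume "(transpose k *v axis l 1) $ m \<noteq> 0"
      then have lm: "k$l$m \<noteq> 0" by (simp add: transpose_def del: transpose_matrix_vector)
      have jm: "\<not> block_less j m"
      proof (cases "l = i")
        case True
        then have "block_of m = block_of j"
          using column_single_block_if_left_mult_UK[OF o k ij] lm
          by (auto simp: coordspace_eq block_of_eq_iff transpose_def simp del: transpose_matrix_vector)
        then show ?thesis using block_less_imp_neq by metis
      next
        case False
        then show ?thesis using column_not_after_if_left_mult_UK[OF o k _ ij lm] l by (simp add: S_def)
      qed
      then show False using block_less_if_not_after[OF ji] m by (simp add: S_def)
    qed
  qed
  then have "card (insert i S) \<le> card S"
    using orthogonal_matrix_inner[of "transpose k"] o
    by (intro card_le_if_orthonormal_in_coordspace[where f = "\<lambda>l. transpose k *v axis l 1"])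
      (auto simp: inner_axis_axis simp del: transpose_matrix_vector)
  moreover have "i \<notin> S" using block_less_irrefl by (simp add: S_def)
  ultimately show False by simp
qed

lemma block_diagonal_if_stabilizes_UK:
  assumes k: "k \<in> SON" and st: "(\<lambda>x. k ** x) ` UK = UK"
  shows "block_diagonal k"
proof -
  have o: "orthogonal_matrix k" using k by (simp add: SON_def)
  have left: "k ** h \<in> UK" if "block_unitriangular h" for h
    using st block_unitriangular_in_UK[OF that] by blast
  have right: "transpose k ** h \<in> UK" if h: "block_unitriangular h" for h
  proof -
    obtain x where "x \<in> UK" "h = k ** x" using st block_unitriangular_in_UK[OF h] by blast
    then show ?thesis by (simp add: orthogonal_matrix_cancel[OF o])
  qed
  show ?thesis unfolding block_diagonal_def
  proof (intro allI impI)
    fix i j assume nz: "k$i$j \<noteq> 0"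
    show "block_of i = block_of j"
    proof (rule ccontr)
      assume "block_of i \<noteq> block_of j"
      then consider "block_less i j" | "block_less j i" using block_less_linear by blast
      then show False
      proof cases
        case 1
        have "transpose k $ j $ i = 0"
          using block_upper_triangular_if_left_mult_UK[of "transpose k"] o right 1 by simp
        then show False using nz by (simp add: transpose_def)
      next
        case 2
        then show False using block_upper_triangular_if_left_mult_UK[OF o left] nz by blast
      qed
    qed
  qed
qed

lemma normalizer_K_eq: "normalizer_K (U_part P) = {k \<in> SON. block_diagonal k}"
proof (intro set_eqI iffI)
  fix k assume "k \<in> normalizer_K (U_part P)"
  then have "k \<in> SON" "(\<lambda>u. k ** u ** transpose k) ` U_part P = U_part P"
    by (auto simp: normalizer_K_def SON_def matrix_inv_orthogonal)
  then show "k \<in> {k \<in> SON. block_diagonal k}"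
    using block_diagonal_if_stabilizes_UK conj_invariant_left_mult_UK by blast
next
  fix k assume "k \<in> {k \<in> SON. block_diagonal k}"
  then show "k \<in> normalizer_K (U_part P)"
    using block_diagonal_conj_image by (auto simp: normalizer_K_def SON_def matrix_inv_orthogonal)
qed

lemma G_hor_eq_normalizer_mult_U: "G_hor P = setmul (normalizer_K (U_part P)) (U_part P)"
proof (intro set_eqI iffI)
  fix g assume "g \<in> G_hor P"
  then have st: "(\<lambda>x. g ** x) ` UK = UK" by (simp add: G_hor_eq_stabilizer UK_def)
  then have "g \<in> UK" using block_unitriangular_in_UK[OF block_unitriangular_mat_1] by force
  then obtain u q where u: "block_unitriangular u" and q: "q \<in> SON" and g: "g = u ** q"
    unfolding UK_iff by blast
  obtain v where v: "block_unitriangular v" "v ** u = mat 1" using block_unitriangular_inverse[OF u] by blast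
  have "q = v ** g" using v(2) g by (simp add: matrix_mul_assoc)
  then have "(\<lambda>x. q ** x) ` UK = UK"
    using st block_unitriangular_left_mult_UK[OF v(1)] by (simp add: image_left_mult_mult)
  then have qb: "block_diagonal q" using block_diagonal_if_stabilizes_UK[OF q] by blast
  have o: "orthogonal_matrix q" using q by (simp add: SON_def)
  have "transpose q ** u ** q \<in> U_part P"
    using block_unitriangular_conj[OF block_diagonal_transpose[OF qb] qb _ u] o
    by (simp add: U_part_eq orthogonal_matrix_def)
  moreover have "g = q ** (transpose q ** u ** q)"
    using g by (simp add: matrix_mul_assoc[symmetric] orthogonal_matrix_cancel[OF o])
  moreover have "q \<in> normalizer_K (U_part P)" using q qb by (simp add: normalizer_K_eq)
  ultimately show "g \<in> setmul (normalizer_K (U_part P)) (U_part P)"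
    unfolding setmul_def by blast
next
  fix g assume "g \<in> setmul (normalizer_K (U_part P)) (U_part P)"
  then obtain k u where "k \<in> normalizer_K (U_part P)" "u \<in> U_part P" and g: "g = k ** u"
    unfolding setmul_def by blast
  then have k: "k \<in> SON" "block_diagonal k" and u: "block_unitriangular u"
    unfolding normalizer_K_eq by (auto simp: U_part_eq)
  have "det g = 1" using k u by (simp add: g det_mul SON_def det_block_unitriangular)
  moreover have "(\<lambda>x. g ** x) ` UK = UK"
    using conj_invariant_left_mult_UK[OF k(1) block_diagonal_conj_image[OF k]]
      block_unitriangular_left_mult_UK[OF u]
    by (simp add: g image_left_mult_mult)
  ultimately show "g \<in> G_hor P" by (simp add: G_hor_eq_stabilizer SLN_def UK_def)
qed

section \<open>The identity component\<close>

lemma block_diagonal_outside: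
  assumes "block_diagonal k" "I \<in> P" "c \<in> I" "l \<notin> I"
  shows "k$c$l = 0" "k$l$c = 0"
  using assms block_diagonalD[of k c l] block_diagonalD[of k l c] block_of_eq mem_block_of by metis+

lemma K_part_entries_iff:
  "(\<forall>i j. k$i$j \<noteq> 0 \<longrightarrow> (\<exists>I\<in>P. i \<in> I \<and> j \<in> I)) \<longleftrightarrow> block_diagonal k"
  unfolding block_diagonal_def using block_of_eq block_of_in mem_block_of by metis

lemma orthogonal_iff_block_orthogonal:
  assumes b: "block_diagonal k"
  shows "orthogonal_matrix k \<longleftrightarrow> (\<forall>I\<in>P. block_orthogonal k I)"
proof -
  have sum_block: "(\<Sum>l\<in>I. k$l$c * k$l$d) = (\<Sum>l\<in>UNIV. k$l$c * k$l$d)" if "I \<in> P" "c \<in> I" for I c d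
    using block_diagonal_outside(2)[OF b that] by (intro sum.mono_neutral_left) auto
  show ?thesis
  proof
    assume "orthogonal_matrix k"
    then show "\<forall>I\<in>P. block_orthogonal k I"
      by (simp add: block_orthogonal_def sum_block orthogonal_matrix_iff_sum)
  next
    assume bo: "\<forall>I\<in>P. block_orthogonal k I"
    have "(\<Sum>l\<in>UNIV. k$l$c * k$l$d) = (if c = d then 1 else 0)" for c d
    proof (cases "block_of c = block_of d")
      case True
      then show ?thesis
        using bo block_of_in[of c] mem_block_of[of c] block_of_eq_iff[of d c]
        by (simp add: block_orthogonal_def flip: sum_block)
    next
      case False
      have z: "k$l$c * k$l$d = 0" for l
        using block_diagonalD[OF b, of l c] block_diagonalD[OF b, of l d] False by auto
      have "(\<Sum>l\<in>UNIV. k$l$c * k$l$d) = 0" by (rule sum.neutral) (use z in blast)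
      then show ?thesis using False by auto
    qed
    then show "orthogonal_matrix k" by (simp add: orthogonal_matrix_iff_sum)
  qed
qed

lemma K_part_eq:
  "K_part P = {k. block_diagonal k \<and> orthogonal_matrix k \<and> (\<forall>I\<in>P. block_det k I = 1)}"
  unfolding K_part_def K_part_entries_iff by (auto simp: orthogonal_iff_block_orthogonal)

lemma block_det_mult_block_diagonal:
  "block_diagonal a \<Longrightarrow> I \<in> P \<Longrightarrow> block_det (a ** b) I = block_det a I * block_det b I"
  by (rule block_det_mult) (rule block_diagonal_outside)

lemma block_det_block_unitriangular:
  assumes u: "block_unitriangular u" and I: "I \<in> P"
  shows "block_det u I = 1"
proof (rule block_det_eq_1)
  fix c d assume "c \<in> I" "d \<in> I"
  then have "\<not> block_less c d" using block_less_imp_neq block_of_eq[OF I] by metis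
  then show "u$c$d = (if c = d then 1 else 0)"
    using block_unitriangularD(1)[OF u, of c] block_unitriangularD(2)[OF u, of c d] by auto
qed

lemma block_det_orthogonal_block_diagonal:
  assumes "orthogonal_matrix k" "block_diagonal k" "I \<in> P"
  shows "block_det k I = 1 \<or> block_det k I = -1"
  using det_orthogonal_matrix[OF orthogonal_matrix_block_embed] block_diagonal_outside(2) assms
  by (metis det_block_embed)

lemma K_part_mult: "a \<in> K_part P \<Longrightarrow> b \<in> K_part P \<Longrightarrow> a ** b \<in> K_part P"
  by (simp add: K_part_eq block_diagonal_mult orthogonal_matrix_mul block_det_mult_block_diagonal)

lemma mat_1_in_K_part: "mat 1 \<in> K_part P"
  using block_det_block_unitriangular[OF block_unitriangular_mat_1]
  by (simp add: K_part_eq block_diagonal_mat_1 orthogonal_matrix_id)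

lemma plane_rotation_in_K_part:
  assumes I: "I \<in> P" and ab: "a \<in> coordspace I" "b \<in> coordspace I"
    and unit: "norm a = 1" "norm b = 1" "a \<bullet> b = 0"
  shows "plane_rotation a b \<theta> \<in> K_part P"
proof -
  let ?r = "plane_rotation a b \<theta>"
  have outside: "?r $ c $ d = (if c = d then 1 else 0)" if "c \<notin> I \<or> d \<notin> I" for c d
    using plane_rotation_nth_outside[OF ab that] .
  have "block_diagonal ?r"
    unfolding block_diagonal_def using outside block_of_eq[OF I] by (metis zero_neq_one)
  moreover have "block_det ?r J = 1" if J: "J \<in> P" for J
  proof (cases "J = I")
    case True
    then show ?thesis
      using block_embed_eq_self[OF outside] det_plane_rotation[OF unit] by (metis det_block_embed)
  next
    case False
    then have "J \<inter> I = {}" using partition_onD2[OF partition] I J by (auto simp: disjoint_def)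
    then show ?thesis using outside by (intro block_det_eq_1) blast
  qed
  ultimately show ?thesis
    by (simp add: K_part_eq orthogonal_matrix_plane_rotation[OF unit])
qed

text \<open>Columns are straightened one at a time by plane rotations inside a block. The last
  index of each block is never moved: its column is forced by the others and the block
  determinant, and it is the auxiliary axis for the half-turn of
  \<open>unit_vector_rotation_to_axis\<close>.\<close>

definition block_top :: "'n \<Rightarrow> 'n" where
  "block_top j = Max (block_of j)"

definition moved :: "((real, 'n) vec, 'n) vec \<Rightarrow> 'n set" where
  "moved k = {j. j \<noteq> block_top j \<and> k *v axis j 1 \<noteq> axis j 1}"

lemma block_top_in: "block_top j \<in> block_of j"
  unfolding block_top_def using mem_block_of[of j] by (intro Max_in) auto

lemma block_top_cong: "block_of c = block_of j \<Longrightarrow> block_top c = block_top j"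
  by (simp add: block_top_def)

lemma K_part_unmoved_eq_mat_1:
  assumes k: "k \<in> K_part P" and unmoved: "moved k = {}"
  shows "k = mat 1"
proof -
  have b: "block_diagonal k" and o: "orthogonal_matrix k" and bd: "\<And>I. I \<in> P \<Longrightarrow> block_det k I = 1"
    using k by (auto simp: K_part_eq)
  have fixed: "k *v axis j 1 = axis j 1" if "j \<noteq> block_top j" for j
    using unmoved that by (auto simp: moved_def)
  have col: "k$c$j = (if c = j then 1 else 0)" if "j \<noteq> block_top j" for c j
    using arg_cong[OF fixed[OF that], of "\<lambda>x. x$c"] by (simp add: axis_nth_if)
  have offdiag: "k$c$d = 0" if cd: "c \<noteq> d" for c d
  proof (cases "d = block_top d \<and> block_of c = block_of d")
    case True
    then have "c \<noteq> block_top c" using cd block_top_cong[of c d] by auto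
    have "(k *v axis d 1) \<bullet> (k *v axis c 1) = axis d 1 \<bullet> (axis c 1 :: (real, 'n) vec)"
      by (rule orthogonal_matrix_inner[OF o])
    then show ?thesis using fixed[OF \<open>c \<noteq> block_top c\<close>] cd by (simp add: inner_axis_axis inner_axis axis_nth_if)
  next
    case False
    then show ?thesis using col cd block_diagonalD[OF b, of c d] by auto
  qed
  have diag: "k$m$m = 1" for m
  proof (cases "m = block_top m")
    case True
    let ?I = "block_of m"
    have "block_det k ?I = det (block_embed k ?I)" by (simp add: det_block_embed)
    also have "\<dots> = (\<Prod>c\<in>UNIV. block_embed k ?I $ c $ c)"
      by (rule det_diagonal) (simp add: block_embed_def offdiag)
    also have "\<dots> = (\<Prod>c\<in>UNIV. if c = m then k$m$m else 1)"
    proof (rule prod.cong[OF refl])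
      fix c
      have "c \<in> ?I \<Longrightarrow> c \<noteq> m \<Longrightarrow> c \<noteq> block_top c"
        using True block_top_cong[of c m] block_of_eq_iff[of c m] by auto
      then show "block_embed k ?I $ c $ c = (if c = m then k$m$m else 1)"
        using col[of c c] by (auto simp: block_embed_def mem_block_of)
    qed
    also have "\<dots> = k$m$m" by (simp add: prod.If_cases)
    finally show ?thesis using bd[OF block_of_in] by simp
  qed (simp add: col)
  show ?thesis using offdiag diag by (simp add: vec_eq_iff mat_1_nth)
qed

lemma moved_mult_subset:
  assumes o: "orthogonal_matrix k" and rj: "r *v (k *v axis j 1) = axis j 1"
    and r_fixes: "\<And>j'. j' \<noteq> j \<Longrightarrow> j' \<noteq> block_top j \<Longrightarrow> (k *v axis j 1)$j' = 0
      \<Longrightarrow> r *v axis j' 1 = axis j' 1"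
  shows "moved (r ** k) \<subseteq> moved k - {j}"
proof
  fix j' assume "j' \<in> moved (r ** k)"
  then have j't: "j' \<noteq> block_top j'" and ne: "r *v (k *v axis j' 1) \<noteq> axis j' 1"
    by (auto simp: moved_def matrix_vector_mul_assoc)
  have "j' \<noteq> j" using ne rj by auto
  moreover have "k *v axis j' 1 \<noteq> axis j' 1"
  proof
    assume kj': "k *v axis j' 1 = axis j' 1"
    have "(k *v axis j 1) \<bullet> (k *v axis j' 1) = axis j 1 \<bullet> (axis j' 1 :: (real, 'n) vec)"
      by (rule orthogonal_matrix_inner[OF o])
    then have "(k *v axis j 1)$j' = 0" using kj' \<open>j' \<noteq> j\<close> by (simp add: inner_axis_axis inner_axis axis_nth_if)
    moreover have "j' \<noteq> block_top j"
      using j't block_top_in block_top_cong block_of_eq_iff by metis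
    ultimately show False using r_fixes \<open>j' \<noteq> j\<close> ne kj' by simp
  qed
  ultimately show "j' \<in> moved k - {j}" using j't by (simp add: moved_def)
qed

lemma K_part_reduce_moved:
  assumes k: "k \<in> K_part P" and j: "j \<in> moved k"
  obtains k' where "k' \<in> K_part P" "path_component (K_part P) k k'" "moved k' \<subset> moved k"
proof -
  have b: "block_diagonal k" and o: "orthogonal_matrix k" using k by (auto simp: K_part_eq)
  have jt: "block_top j \<noteq> j" and ne: "k *v axis j 1 \<noteq> axis j 1" using j by (auto simp: moved_def)
  define v where "v = k *v axis j 1"
  have v1: "norm v = 1" by (simp add: v_def orthogonal_matrix_norm[OF o])
  obtain b \<alpha> where bn: "norm b = 1" and vb: "v \<bullet> b = 0"
    and rv: "plane_rotation v b \<alpha> *v v = axis j 1"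
    and bs: "\<And>c. b$c \<noteq> 0 \<Longrightarrow> v$c \<noteq> 0 \<or> c = j \<or> c = block_top j"
    using unit_vector_rotation_to_axis[OF v1 _ jt] ne v_def by blast
  have vI: "v \<in> coordspace (block_of j)"
    using block_diagonalD[OF b] block_of_eq_iff by (auto simp: coordspace_eq v_def)
  moreover have "b \<in> coordspace (block_of j)"
    using bs vI block_top_in mem_block_of by (fastforce simp: coordspace_eq)
  ultimately have r: "plane_rotation v b \<theta> \<in> K_part P" for \<theta>
    using plane_rotation_in_K_part[OF block_of_in _ _ v1 bn vb] by blast
  let ?k' = "plane_rotation v b \<alpha> ** k"
  have "path_component (K_part P) k ?k'"
    unfolding path_component_def
  proof (intro exI conjI)
    let ?g = "\<lambda>t. plane_rotation v b (t * \<alpha>) ** k"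
    show "path ?g" unfolding path_def by (intro continuous_intros)
    show "path_image ?g \<subseteq> K_part P" using K_part_mult[OF r k] by (auto simp: path_image_def)
  qed (simp_all add: pathstart_def pathfinish_def)
  moreover have "moved ?k' \<subseteq> moved k - {j}"
  proof (rule moved_mult_subset[OF o])
    show "plane_rotation v b \<alpha> *v (k *v axis j 1) = axis j 1" using rv by (simp add: v_def)
    fix j' assume "j' \<noteq> j" "j' \<noteq> block_top j" "(k *v axis j 1)$j' = 0"
    then show "plane_rotation v b \<alpha> *v axis j' 1 = axis j' 1"
      using bs[of j'] by (intro plane_rotation_fixes) (auto simp: inner_axis v_def)
  qed
  ultimately show ?thesis using that K_part_mult[OF r k] j by blast
qed

lemma path_component_K_part: "k \<in> K_part P \<Longrightarrow> path_component (K_part P) (mat 1) k"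
proof (induct "card (moved k)" arbitrary: k rule: less_induct)
  case less
  show ?case
  proof (cases "moved k = {}")
    case True
    then show ?thesis
      using K_part_unmoved_eq_mat_1[OF less(2)] mat_1_in_K_part path_component_refl by metis
  next
    case False
    then obtain j where "j \<in> moved k" by blast
    then obtain k' where k': "k' \<in> K_part P" "path_component (K_part P) k k'" "moved k' \<subset> moved k"
      using K_part_reduce_moved[OF less(2)] by blast
    have "card (moved k') < card (moved k)" using k'(3) by (simp add: psubset_card_mono)
    then have "path_component (K_part P) (mat 1) k'" using less(1) k'(1) by blast
    then show ?thesis using k'(2) path_component_sym path_component_trans by metis
  qed
qed

lemma K_part_subset_SON: "k \<in> K_part P \<Longrightarrow> k \<in> SON"
proof -
  assume k: "k \<in> K_part P"
  let ?C = "path_component_set (K_part P) (mat 1)"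
  have sub: "?C \<subseteq> K_part P" by (rule path_component_subset)
  have "det (mat 1 :: ((real, 'n) vec, 'n) vec) = det k"
  proof (rule connected_finite_range_eq[where f = det and S = ?C and F = "{-1, 1}"])
    show "connected ?C" by (simp add: path_connected_imp_connected)
    show "continuous_on ?C det" using continuous_on_det[OF continuous_on_id] by simp
    show "det ` ?C \<subseteq> {-1, 1}" using sub det_orthogonal_matrix by (fastforce simp: K_part_eq)
    show "mat 1 \<in> ?C" by (simp add: path_component_refl mat_1_in_K_part)
    show "k \<in> ?C" using path_component_K_part[OF k] by simp
  qed simp
  then show "k \<in> SON" using k by (simp add: SON_def K_part_eq)
qed

lemma G_hor_eq_block_diagonal_mult_U:
  "G_hor P = {k ** u | k u. k \<in> SON \<and> block_diagonal k \<and> block_unitriangular u}"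
  unfolding G_hor_eq_normalizer_mult_U setmul_def normalizer_K_eq by (auto simp: U_part_eq)

lemma block_det_G_hor:
  assumes "x \<in> G_hor P" "I \<in> P"
  shows "block_det x I \<in> {-1, 1}"
proof -
  obtain k u where "k \<in> SON" "block_diagonal k" "block_unitriangular u" "x = k ** u"
    using assms(1) G_hor_eq_block_diagonal_mult_U by blast
  then show ?thesis
    using block_det_orthogonal_block_diagonal block_det_mult_block_diagonal
      block_det_block_unitriangular assms(2) by (fastforce simp: SON_def)
qed

lemma connected_component_G_hor_subset:
  "connected_component_set (G_hor P) (mat 1) \<subseteq> setmul (K_part P) (U_part P)"
proof
  let ?C = "connected_component_set (G_hor P) (mat 1)"
  fix g assume g: "g \<in> ?C"
  then obtain k u where k: "k \<in> SON" "block_diagonal k" and u: "block_unitriangular u"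
    and gku: "g = k ** u"
    using connected_component_subset G_hor_eq_block_diagonal_mult_U by blast
  have "block_det k I = 1" if I: "I \<in> P" for I
  proof -
    have "block_det (mat 1) I = block_det g I"
    proof (rule connected_finite_range_eq[where f = "\<lambda>x. block_det x I" and S = ?C and F = "{-1, 1}"])
      show "(\<lambda>x. block_det x I) ` ?C \<subseteq> {-1, 1}"
        using block_det_G_hor[OF _ I] connected_component_subset by blast
      show "mat 1 \<in> ?C" using g connected_component_in by fastforce
    qed (use g in \<open>auto intro!: continuous_intros\<close>)
    then show ?thesis
      using block_det_block_unitriangular[OF block_unitriangular_mat_1 I]
        block_det_block_unitriangular[OF u I] block_det_mult_block_diagonal[OF k(2) I]
      by (simp add: gku)
  qed
  then have "k \<in> K_part P" using k by (simp add: K_part_eq SON_def)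
  then show "g \<in> setmul (K_part P) (U_part P)"
    using u gku by (auto simp: setmul_def U_part_eq)
qed

lemma path_component_G_hor:
  assumes k: "k \<in> K_part P" and u: "block_unitriangular u"
  shows "path_component (G_hor P) (mat 1) (k ** u)"
proof -
  obtain \<gamma> where \<gamma>: "path \<gamma>" "path_image \<gamma> \<subseteq> K_part P" "pathstart \<gamma> = mat 1" "pathfinish \<gamma> = k"
    using path_component_K_part[OF k] unfolding path_component_def by blast
  define \<delta> where "\<delta> t = \<gamma> t ** (mat 1 + t *\<^sub>R (u - mat 1))" for t
  have "path \<delta>" using \<gamma>(1) unfolding path_def \<delta>_def by (intro continuous_intros)
  moreover have "path_image \<delta> \<subseteq> G_hor P"
    unfolding path_image_def
  proof (rule image_subsetI)
    fix t :: real assume "t \<in> {0..1}"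
    then have "\<gamma> t \<in> K_part P" using \<gamma>(2) by (auto simp: path_image_def)
    then have "\<gamma> t \<in> SON" "block_diagonal (\<gamma> t)"
      using K_part_subset_SON by (auto simp: K_part_eq)
    then show "\<delta> t \<in> G_hor P"
      using block_unitriangular_segment[OF u] by (auto simp: G_hor_eq_block_diagonal_mult_U \<delta>_def)
  qed
  moreover have "pathstart \<delta> = mat 1" "pathfinish \<delta> = k ** u"
    using \<gamma>(3,4) by (simp_all add: \<delta>_def pathstart_def pathfinish_def)
  ultimately show ?thesis unfolding path_component_def by blast
qed

lemma connected_component_G_hor:
  "connected_component_set (G_hor P) (mat 1) = setmul (K_part P) (U_part P)"
proof
  show "setmul (K_part P) (U_part P) \<subseteq> connected_component_set (G_hor P) (mat 1)"
    using path_component_G_hor path_component_subset_connected_component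
    by (fastforce simp: setmul_def U_part_eq)
qed (rule connected_component_G_hor_subset)

end

theorem lemma4p1:
  fixes P :: "('n::{finite,linorder}) set set"
  assumes "CARD('n) \<ge> 2"
    and "consecutive_partition P"
  shows "G_hor P = setmul (normalizer_K (U_part P)) (U_part P)
         \<and> connected_component_set (G_hor P) (mat 1) = setmul (K_part P) (U_part P)"
proof -
  interpret consecutive_blocks P by (rule consecutive_blocks.intro) (rule assms(2))
  show ?thesis using G_hor_eq_normalizer_mult_U connected_component_G_hor by simp
qed

end
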